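(* Let $\lambda\in\mathbb{R}$. Let $\psi\in C^\infty\big(\mathbb{R}^n\times(\mathbb{R}^n\setminus\{0\})\big)$ be positively homogeneous of degree $\lambda$ in $\xi$ and satisfy $\psi(x+\tau\xi,\xi)=\psi(x,\xi)$ for all $\tau\in\mathbb{R}$. Let $\varphi$ be the restriction of $\psi$ to $T\mathbb{S}^{n-1}$. Then for every integer $k\ge1$ and all indices $1\le i_1,j_1,\dots,i_k,j_k\le n$, $$(J_{i_1j_1}\cdots J_{i_kj_k}\psi)|_{T\mathbb{S}^{n-1}}=E_1E_2\cdots E_k\varphi,$$ where $$E_l=\mathcal{J}_{i_lj_l}-c_l(\lambda,k)\big(\xi_{i_l}X_{j_l}-\xi_{j_l}X_{i_l}\big),\qquad c_l(\lambda,k)=\lambda-k+l+1,$$ and the composition is taken with $E_1$ leftmost.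
   Context: $T\mathbb{S}^{n-1}=\{(x,\xi):|\xi|=1,\ \langle x,\xi\rangle=0\}$. Positive homogeneity of degree $\lambda$ in $\xi$ means $\psi(x,c\xi)=c^\lambda\psi(x,\xi)$ for $c>0$. The John operators are $J_{ij}=\partial^2/\partial x^i\partial\xi^j-\partial^2/\partial x^j\partial\xi^i$. Define vector fields on $\mathbb{R}^n\times\mathbb{R}^n$ (summation over $p$) $$\tilde X_i=\partial/\partial x^i-\xi_i\xi^p\,\partial/\partial x^p,\qquad \tilde\Xi_i=\partial/\partial\xi^i-x_i\xi^p\,\partial/\partial x^p-\xi_i\xi^p\,\partial/\partial\xi^p.$$ These are tangent to $T\mathbb{S}^{n-1}$; $X_i,\Xi_i$ are their restrictions, and $\mathcal{J}_{ij}=X_i\Xi_j-X_j\Xi_i$. Here $\xi_i=\xi^i$ acts by multiplication. *)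

theory Defs
  imports "HOL-Analysis.Analysis"
begin

text \<open>Points of R^n x R^n are pairs (x, xi) of type real^'n \<times> real^'n;
 indices 1..n are elements of the finite type 'n.\<close>

type_synonym 'n pt = "(real ^ 'n) \<times> (real ^ 'n)"

definition pd :: "'n::finite pt \<Rightarrow> ('n pt \<Rightarrow> real) \<Rightarrow> ('n pt \<Rightarrow> real)" where
  "pd v f = (\<lambda>p. frechet_derivative f (at p) v)"

fun Ck :: "nat \<Rightarrow> 'n::finite pt set \<Rightarrow> ('n pt \<Rightarrow> real) \<Rightarrow> bool" where
  "Ck 0 U f = continuous_on U f"
| "Ck (Suc k) U f = (f differentiable_on U \<and> (\<forall>v. Ck k U (pd v f)))"

definition smooth_on :: "'n::finite pt set \<Rightarrow> ('n pt \<Rightarrow> real) \<Rightarrow> bool" where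
  "smooth_on U f = (\<forall>k. Ck k U f)"

definition ex :: "'n::finite \<Rightarrow> 'n pt" where "ex i = (axis i 1, 0)"
definition eXi :: "'n::finite \<Rightarrow> 'n pt" where "eXi i = (0, axis i 1)"

definition John :: "'n::finite \<Rightarrow> 'n \<Rightarrow> ('n pt \<Rightarrow> real) \<Rightarrow> ('n pt \<Rightarrow> real)" where
  "John i j f = (\<lambda>p. pd (ex i) (pd (eXi j) f) p - pd (ex j) (pd (eXi i) f) p)"

fun John_comp :: "('n::finite \<times> 'n) list \<Rightarrow> ('n pt \<Rightarrow> real) \<Rightarrow> ('n pt \<Rightarrow> real)" where
  "John_comp [] f = f"
| "John_comp ((i,j) # ps) f = John i j (John_comp ps f)"

definition TS :: "'n::finite pt set" where
  "TS = {(x, xi). norm xi = 1 \<and> inner x xi = 0}"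

definition Xt :: "'n::finite \<Rightarrow> 'n pt \<Rightarrow> 'n pt" where
  "Xt i = (\<lambda>(x, xi). (axis i 1 - (xi $ i) *\<^sub>R xi, 0))"

definition Xit :: "'n::finite \<Rightarrow> 'n pt \<Rightarrow> 'n pt" where
  "Xit i = (\<lambda>(x, xi). (- (x $ i) *\<^sub>R xi, axis i 1 - (xi $ i) *\<^sub>R xi))"

text \<open>Only values of f
 on TS matter; on tangent vectors this derivative is uniquely determined.\<close>
definition vf_act :: "('n::finite pt \<Rightarrow> 'n pt) \<Rightarrow> ('n pt \<Rightarrow> real) \<Rightarrow> ('n pt \<Rightarrow> real)" where
  "vf_act V f = (\<lambda>p. (SOME f'. (f has_derivative f') (at p within TS)) (V p))"

abbreviation X :: "'n::finite \<Rightarrow> ('n pt \<Rightarrow> real) \<Rightarrow> ('n pt \<Rightarrow> real)" where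
  "X i \<equiv> vf_act (Xt i)"
abbreviation Xi :: "'n::finite \<Rightarrow> ('n pt \<Rightarrow> real) \<Rightarrow> ('n pt \<Rightarrow> real)" where
  "Xi i \<equiv> vf_act (Xit i)"

definition John_TS :: "'n::finite \<Rightarrow> 'n \<Rightarrow> ('n pt \<Rightarrow> real) \<Rightarrow> ('n pt \<Rightarrow> real)" where
  "John_TS i j f = (\<lambda>p. X i (Xi j f) p - X j (Xi i f) p)"

definition Eop :: "real \<Rightarrow> nat \<Rightarrow> nat \<Rightarrow> 'n::finite \<Rightarrow> 'n \<Rightarrow> ('n pt \<Rightarrow> real) \<Rightarrow> ('n pt \<Rightarrow> real)" where
  "Eop lam k l i j f = (\<lambda>p. John_TS i j f p
      - (lam - real k + real l + 1) * ((snd p) $ i * X j f p - (snd p) $ j * X i f p))"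

fun Eseq :: "real \<Rightarrow> nat \<Rightarrow> nat \<Rightarrow> ('n::finite \<times> 'n) list \<Rightarrow> ('n pt \<Rightarrow> real) \<Rightarrow> ('n pt \<Rightarrow> real)" where
  "Eseq lam k l [] f = f"
| "Eseq lam k l ((i,j) # ps) f = Eop lam k l i j (Eseq lam k (Suc l) ps f)"

end

theory Submission
  imports Defs
begin

(* Every John operator J_ij commutes with the translations (x, xi) -> (x + tau xi, xi) and
   lowers the degree of homogeneity in xi by one; for the translations this needs the
   symmetry of the second x-derivatives. So H = J_{l+1} ... J_k psi is translation invariant
   and homogeneous of degree mu = lam - k + l. On TS the vector fields see such an H
   through simple formulas: X_a h = dH/dx^a because xi . grad_x H = 0, and
   Xi_b h = dH/dxi^b - mu xi_b H by Euler's identity, where h = H on TS. Differentiating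
   once more gives J_ij H = John_TS i j h - (mu + 1) (xi_i X_j h - xi_j X_i h) on TS, and
   mu + 1 = c_l. *)

section \<open>Smooth functions and directional derivatives\<close>

lemma Ck_cong:
  assumes U: "open U" and fg: "\<And>y. y \<in> U \<Longrightarrow> f y = g y" and f: "Ck k U f"
  shows "Ck k U g"
  using fg f
proof (induction k arbitrary: f g)
  case 0
  then show ?case using continuous_on_cong[of U U f g] by simp
next
  case (Suc k)
  from Suc.prems(2) have df: "f differentiable_on U" and Cf: "\<And>v. Ck k U (pd v f)"
    unfolding Ck.simps by blast+
  have dg: "(g has_derivative frechet_derivative f (at y)) (at y)" if y: "y \<in> U" for y
  proof (rule has_derivative_transform_within_open[OF _ U y])
    show "(f has_derivative frechet_derivative f (at y)) (at y)"
      using df y U by (simp add: differentiable_on_eq_differentiable_at frechet_derivative_works)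
  qed (use Suc.prems(1) in simp)
  then have "g differentiable_on U"
    unfolding differentiable_on_eq_differentiable_at[OF U] differentiable_def by blast
  moreover have "pd v f y = pd v g y" if "y \<in> U" for v y
    unfolding pd_def using frechet_derivative_at[OF dg[OF that]] by simp
  ultimately show ?case using Suc.IH Cf unfolding Ck.simps by blast
qed

lemma Ck_diff:
  assumes U: "open U" and f: "Ck k U f" and g: "Ck k U g"
  shows "Ck k U (\<lambda>y. f y - g y)"
  using f g
proof (induction k arbitrary: f g)
  case 0
  then show ?case by (simp add: continuous_on_diff)
next
  case (Suc k)
  from Suc.prems have df: "f differentiable_on U" and dg: "g differentiable_on U"
    and Cf: "\<And>v. Ck k U (pd v f)" and Cg: "\<And>v. Ck k U (pd v g)"
    unfolding Ck.simps by blast+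
  have pd_diff_fun: "pd v f y - pd v g y = pd v (\<lambda>y. f y - g y) y" if y: "y \<in> U" for v y
  proof -
    have "f differentiable at y" "g differentiable at y"
      using df dg y by (simp_all add: differentiable_on_eq_differentiable_at[OF U])
    then have "((\<lambda>y. f y - g y) has_derivative
        (\<lambda>v. frechet_derivative f (at y) v - frechet_derivative g (at y) v)) (at y)"
      by (intro has_derivative_diff) (simp_all add: frechet_derivative_works)
    then show ?thesis unfolding pd_def by (simp add: frechet_derivative_at[symmetric])
  qed
  have "Ck k U (pd v (\<lambda>y. f y - g y))" for v
    by (rule Ck_cong[OF U pd_diff_fun[of _ v] Suc.IH[OF Cf[of v] Cg[of v]]])
  moreover have "(\<lambda>y. f y - g y) differentiable_on U"
    using df dg by (rule differentiable_on_diff)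
  ultimately show ?case unfolding Ck.simps by blast
qed

lemma smooth_on_pd: "smooth_on U f \<Longrightarrow> smooth_on U (pd v f)"
  unfolding smooth_on_def by (metis Ck.simps(2))

lemma smooth_on_diff:
  "open U \<Longrightarrow> smooth_on U f \<Longrightarrow> smooth_on U g \<Longrightarrow> smooth_on U (\<lambda>y. f y - g y)"
  unfolding smooth_on_def by (blast intro: Ck_diff)

lemma smooth_on_John: "open U \<Longrightarrow> smooth_on U f \<Longrightarrow> smooth_on U (John i j f)"
  unfolding John_def by (intro smooth_on_diff smooth_on_pd)

lemma smooth_on_imp_continuous_on: "smooth_on U f \<Longrightarrow> continuous_on U f"
  unfolding smooth_on_def by (metis Ck.simps(1))

lemma smooth_on_imp_differentiable_on: "smooth_on U f \<Longrightarrow> f differentiable_on U"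
  unfolding smooth_on_def by (metis Ck.simps(2))

lemma differentiable_on_has_derivative_pd:
  "open U \<Longrightarrow> f differentiable_on U \<Longrightarrow> y \<in> U \<Longrightarrow> (f has_derivative (\<lambda>v. pd v f y)) (at y)"
  unfolding pd_def
  by (simp add: differentiable_on_eq_differentiable_at frechet_derivative_works[symmetric])

lemma smooth_on_has_derivative_pd:
  "open U \<Longrightarrow> smooth_on U f \<Longrightarrow> y \<in> U \<Longrightarrow> (f has_derivative (\<lambda>v. pd v f y)) (at y)"
  by (simp add: differentiable_on_has_derivative_pd smooth_on_imp_differentiable_on)

lemma linear_pd: "f differentiable at y \<Longrightarrow> linear (\<lambda>v. pd v f y)"
  unfolding pd_def by (simp add: linear_frechet_derivative)

lemma pd_diff: "f differentiable at y \<Longrightarrow> pd (u - v) f y = pd u f y - pd v f y"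
  using linear_diff[OF linear_pd] .

lemma pd_scaleR: "f differentiable at y \<Longrightarrow> pd (c *\<^sub>R v) f y = c * pd v f y"
  using linear_scale[OF linear_pd] by simp

lemma has_real_derivative_along_line:
  assumes "(f has_derivative f') (at (q + t *\<^sub>R u))"
  shows "((\<lambda>s. f (q + s *\<^sub>R u)) has_real_derivative f' u) (at t)"
proof -
  have "((\<lambda>s. q + s *\<^sub>R u) has_derivative (\<lambda>s. s *\<^sub>R u)) (at t)"
    by (auto intro!: derivative_eq_intros)
  from diff_chain_at[OF this assms] have "((\<lambda>s. f (q + s *\<^sub>R u)) has_derivative (\<lambda>s. f' u * s)) (at t)"
    using linear_scale[OF has_derivative_linear[OF assms]] by (simp add: comp_def mult.commute)
  then show ?thesis by (simp add: has_field_derivative_def)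
qed

lemma pd_eq_line_derivative:
  assumes "f differentiable at q" and "(g has_real_derivative D) (at 0)"
    and "\<And>s. \<bar>s\<bar> < 1 \<Longrightarrow> f (q + s *\<^sub>R u) = g s"
  shows "pd u f q = D"
proof -
  have "(f has_derivative (\<lambda>v. pd v f q)) (at (q + 0 *\<^sub>R u))"
    using assms(1) unfolding pd_def by (simp add: frechet_derivative_works[symmetric])
  then have "((\<lambda>s. f (q + s *\<^sub>R u)) has_real_derivative pd u f q) (at 0)"
    by (rule has_real_derivative_along_line)
  then have "(g has_real_derivative pd u f q) (at 0)"
    by (rule has_field_derivative_transform_within_open[where S="ball 0 1"]) (auto simp: assms(3))
  then show ?thesis using assms(2) DERIV_unique by blast
qed

lemma pd_linear_pullback:
  fixes L :: "'n::finite pt \<Rightarrow> 'n pt"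
  assumes L: "linear L" and U: "open U" "q \<in> U"
    and eq: "\<And>y. y \<in> U \<Longrightarrow> F (L y) = G y"
    and dF: "F differentiable at (L q)" and dG: "(G has_derivative G') (at q)"
  shows "pd (L v) F (L q) = G' v"
proof -
  have "((F \<circ> L) has_derivative (frechet_derivative F (at (L q)) \<circ> L)) (at q)"
    using diff_chain_at[OF linear_imp_has_derivative[OF L]] dF frechet_derivative_works by blast
  then have "(G has_derivative (frechet_derivative F (at (L q)) \<circ> L)) (at q)"
    by (rule has_derivative_transform_within_open[OF _ U]) (simp add: eq)
  then have "frechet_derivative F (at (L q)) \<circ> L = G'" using dG has_derivative_unique by blast
  then show ?thesis unfolding pd_def by (metis comp_apply)
qed

section \<open>Symmetry of second derivatives\<close>

lemma second_difference_mean_value: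
  fixes f :: "'n::finite pt \<Rightarrow> real"
  assumes S: "open S" and df: "f differentiable_on S" and du: "pd u f differentiable_on S"
    and s: "s > 0" and sub: "cball q (s * (norm u + norm v)) \<subseteq> S"
  shows "\<exists>y. dist y q \<le> s * (norm u + norm v) \<and>
    f (q + s *\<^sub>R u + s *\<^sub>R v) - f (q + s *\<^sub>R u) - f (q + s *\<^sub>R v) + f q = s\<^sup>2 * pd v (pd u f) y"
proof -
  have near: "dist (q + a *\<^sub>R u + b *\<^sub>R v) q \<le> s * (norm u + norm v)"
    if "0 \<le> a" "a \<le> s" "0 \<le> b" "b \<le> s" for a b
  proof -
    have "norm (a *\<^sub>R u + b *\<^sub>R v) \<le> a * norm u + b * norm v"
      using norm_triangle_ineq[of "a *\<^sub>R u" "b *\<^sub>R v"] that by simp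
    also have "\<dots> \<le> s * (norm u + norm v)"
      using that by (simp add: distrib_left add_mono mult_right_mono)
    finally show ?thesis by (simp add: dist_norm add.assoc)
  qed
  have inS: "q + a *\<^sub>R u + b *\<^sub>R v \<in> S" if "0 \<le> a" "a \<le> s" "0 \<le> b" "b \<le> s" for a b
    using near[OF that] sub by (auto simp: dist_commute)
  define phi where "phi t = f (q + s *\<^sub>R v + t *\<^sub>R u) - f (q + t *\<^sub>R u)" for t
  have dphi: "DERIV phi t :> pd u f (q + s *\<^sub>R v + t *\<^sub>R u) - pd u f (q + t *\<^sub>R u)"
    if "0 \<le> t" "t \<le> s" for t
  proof -
    have "q + s *\<^sub>R v + t *\<^sub>R u \<in> S" "q + t *\<^sub>R u \<in> S"
      using inS[of t s] inS[of t 0] that s by (simp_all add: algebra_simps)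
    then show ?thesis
      unfolding phi_def
      by (intro DERIV_diff has_real_derivative_along_line differentiable_on_has_derivative_pd[OF S df])
  qed
  obtain th where th: "0 < th" "th < s"
    and phi: "phi s - phi 0 = (s - 0) * (pd u f (q + s *\<^sub>R v + th *\<^sub>R u) - pd u f (q + th *\<^sub>R u))"
    using MVT2[OF s dphi] by blast
  define chi where "chi r = pd u f (q + th *\<^sub>R u + r *\<^sub>R v)" for r
  have dchi: "DERIV chi r :> pd v (pd u f) (q + th *\<^sub>R u + r *\<^sub>R v)" if "0 \<le> r" "r \<le> s" for r
    unfolding chi_def using inS[of th r] that th
    by (intro has_real_derivative_along_line differentiable_on_has_derivative_pd[OF S du]) simp_all
  obtain rh where rh: "0 < rh" "rh < s"
    and chi: "chi s - chi 0 = (s - 0) * pd v (pd u f) (q + th *\<^sub>R u + rh *\<^sub>R v)"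
    using MVT2[OF s dchi] by blast
  have "f (q + s *\<^sub>R u + s *\<^sub>R v) - f (q + s *\<^sub>R u) - f (q + s *\<^sub>R v) + f q = phi s - phi 0"
    unfolding phi_def by (simp add: algebra_simps)
  also have "\<dots> = s\<^sup>2 * pd v (pd u f) (q + th *\<^sub>R u + rh *\<^sub>R v)"
    using phi chi unfolding chi_def by (simp add: power2_eq_square algebra_simps)
  finally show ?thesis
    using near[of th rh] th rh by (intro exI[of _ "q + th *\<^sub>R u + rh *\<^sub>R v"]) simp
qed

lemma pd_pd_commute:
  fixes f :: "'n::finite pt \<Rightarrow> real"
  assumes S: "open S" and q: "q \<in> S" and df: "f differentiable_on S"
    and du: "pd u f differentiable_on S" and dv: "pd v f differentiable_on S"
    and cu: "continuous_on S (pd v (pd u f))" and cv: "continuous_on S (pd u (pd v f))"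
  shows "pd v (pd u f) q = pd u (pd v f) q"
proof -
  define a where "a = pd v (pd u f) q"
  define b where "b = pd u (pd v f) q"
  have "\<bar>a - b\<bar> < 2 * e" if e: "e > 0" for e
  proof -
    obtain d1 where d1: "d1 > 0" "\<And>y. y \<in> S \<Longrightarrow> dist y q < d1 \<Longrightarrow> \<bar>pd v (pd u f) y - a\<bar> < e"
      using cu q e unfolding continuous_on_iff a_def dist_real_def by blast
    obtain d2 where d2: "d2 > 0" "\<And>y. y \<in> S \<Longrightarrow> dist y q < d2 \<Longrightarrow> \<bar>pd u (pd v f) y - b\<bar> < e"
      using cv q e unfolding continuous_on_iff b_def dist_real_def by blast
    obtain d0 where d0: "d0 > 0" "ball q d0 \<subseteq> S"
      using S q open_contains_ball by blast
    define r where "r = min d0 (min d1 d2) / 2"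
    define s where "s = r / (norm u + norm v + 1)"
    have r: "r > 0" "r < d0" "r < d1" "r < d2" using d0 d1 d2 by (auto simp: r_def)
    have s: "s > 0" using r by (simp add: s_def add_nonneg_pos)
    have "s * (norm u + norm v) \<le> s * (norm u + norm v + 1)" using s by simp
    also have "\<dots> = r"
      unfolding s_def using add_nonneg_pos[of "norm u + norm v" 1] by simp
    finally have sr: "s * (norm u + norm v) \<le> r" .
    then have sub: "cball q (s * (norm u + norm v)) \<subseteq> S"
      using d0 r by (auto simp: dist_commute)
    obtain y1 where y1: "dist y1 q \<le> s * (norm u + norm v)"
      "f (q + s *\<^sub>R u + s *\<^sub>R v) - f (q + s *\<^sub>R u) - f (q + s *\<^sub>R v) + f q = s\<^sup>2 * pd v (pd u f) y1"
      using second_difference_mean_value[OF S df du s sub] by blast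
    obtain y2 where y2: "dist y2 q \<le> s * (norm v + norm u)"
      "f (q + s *\<^sub>R v + s *\<^sub>R u) - f (q + s *\<^sub>R v) - f (q + s *\<^sub>R u) + f q = s\<^sup>2 * pd u (pd v f) y2"
      using second_difference_mean_value[OF S df dv s] sub by (metis add.commute)
    have "s\<^sup>2 * pd v (pd u f) y1 = s\<^sup>2 * pd u (pd v f) y2"
      using y1(2) y2(2) by (simp add: algebra_simps)
    then have same: "pd v (pd u f) y1 = pd u (pd v f) y2" using s by simp
    have "y1 \<in> S" "y2 \<in> S" using y1(1) y2(1) sub by (auto simp: dist_commute add.commute)
    moreover have "dist y1 q < d1" "dist y2 q < d2" using y1(1) y2(1) sr r by (simp_all add: add.commute)
    ultimately show ?thesis using d1(2)[of y1] d2(2)[of y2] same by linarith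
  qed
  from this[of "\<bar>a - b\<bar> / 2"] show ?thesis unfolding a_def[symmetric] b_def[symmetric]
    by (cases "a = b") auto
qed

section \<open>Symbols homogeneous in xi and invariant along xi\<close>

definition xi_nonzero :: "'n::finite pt set" where
  "xi_nonzero = UNIV \<times> (UNIV - {0})"

lemma open_xi_nonzero: "open xi_nonzero"
  unfolding xi_nonzero_def by (intro open_Times open_Diff) auto

lemma mem_xi_nonzero_iff [simp]: "(x, xi) \<in> xi_nonzero \<longleftrightarrow> xi \<noteq> 0"
  by (simp add: xi_nonzero_def)

definition homogeneous_in_xi :: "real \<Rightarrow> ('n::finite pt \<Rightarrow> real) \<Rightarrow> bool" where
  "homogeneous_in_xi mu H \<longleftrightarrow>
     (\<forall>x xi c. xi \<noteq> 0 \<longrightarrow> c > 0 \<longrightarrow> H (x, c *\<^sub>R xi) = c powr mu * H (x, xi))"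

definition invariant_along_xi :: "('n::finite pt \<Rightarrow> real) \<Rightarrow> bool" where
  "invariant_along_xi H \<longleftrightarrow> (\<forall>x xi tau. xi \<noteq> 0 \<longrightarrow> H (x + tau *\<^sub>R xi, xi) = H (x, xi))"

definition dilate_xi :: "real \<Rightarrow> 'n::finite pt \<Rightarrow> 'n pt" where
  "dilate_xi c = (\<lambda>p. (fst p, c *\<^sub>R snd p))"

definition shift_along_xi :: "real \<Rightarrow> 'n::finite pt \<Rightarrow> 'n pt" where
  "shift_along_xi tau = (\<lambda>p. (fst p + tau *\<^sub>R snd p, snd p))"

lemma linear_dilate_xi: "linear (dilate_xi c)"
  by (rule linearI) (auto simp: dilate_xi_def algebra_simps)

lemma linear_shift_along_xi: "linear (shift_along_xi tau)"
  by (rule linearI) (auto simp: shift_along_xi_def algebra_simps)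

context
  fixes H :: "'n::finite pt \<Rightarrow> real"
  assumes smooth: "smooth_on xi_nonzero H"
begin

lemma differentiable_at_xi_nonzero: "y \<in> xi_nonzero \<Longrightarrow> H differentiable at y"
  using smooth_on_imp_differentiable_on[OF smooth] differentiable_on_eq_differentiable_at[OF open_xi_nonzero]
  by blast

lemma has_derivative_pd_xi_nonzero: "y \<in> xi_nonzero \<Longrightarrow> (H has_derivative (\<lambda>v. pd v H y)) (at y)"
  by (rule smooth_on_has_derivative_pd[OF open_xi_nonzero smooth])

lemma pd_dilate_xi:
  assumes hom: "homogeneous_in_xi mu H" and c: "c > 0" and y: "y \<in> xi_nonzero"
  shows "pd (dilate_xi c v) H (dilate_xi c y) = c powr mu * pd v H y"
proof (rule pd_linear_pullback[OF linear_dilate_xi open_xi_nonzero y])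
  show "H (dilate_xi c z) = c powr mu * H z" if "z \<in> xi_nonzero" for z
    using that hom c by (cases z) (simp add: dilate_xi_def homogeneous_in_xi_def)
  show "H differentiable at (dilate_xi c y)"
    using y c by (intro differentiable_at_xi_nonzero) (cases y, simp add: dilate_xi_def)
  show "((\<lambda>z. c powr mu * H z) has_derivative (\<lambda>v. c powr mu * pd v H y)) (at y)"
    using has_derivative_pd_xi_nonzero[OF y] by (rule has_derivative_mult_right)
qed

lemma homogeneous_in_xi_pd_ex:
  assumes "homogeneous_in_xi mu H"
  shows "homogeneous_in_xi mu (pd (ex i) H)"
  unfolding homogeneous_in_xi_def
proof (intro allI impI)
  fix x xi :: "real ^ 'n" and c :: real
  assume "xi \<noteq> 0" "c > 0"
  then show "pd (ex i) H (x, c *\<^sub>R xi) = c powr mu * pd (ex i) H (x, xi)"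
    using pd_dilate_xi[OF assms, of c "(x, xi)" "ex i"] by (simp add: dilate_xi_def ex_def)
qed

lemma homogeneous_in_xi_pd_eXi:
  assumes "homogeneous_in_xi mu H"
  shows "homogeneous_in_xi (mu - 1) (pd (eXi j) H)"
  unfolding homogeneous_in_xi_def
proof (intro allI impI)
  fix x xi :: "real ^ 'n" and c :: real
  assume xi: "xi \<noteq> 0" and c: "c > 0"
  have "dilate_xi c ((1 / c) *\<^sub>R eXi j) = eXi j" using c by (simp add: dilate_xi_def eXi_def)
  then have "pd (eXi j) H (x, c *\<^sub>R xi) = c powr mu * pd ((1 / c) *\<^sub>R eXi j) H (x, xi)"
    using pd_dilate_xi[OF assms c, of "(x, xi)" "(1 / c) *\<^sub>R eXi j"] xi
    by (simp add: dilate_xi_def)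
  also have "\<dots> = c powr (mu - 1) * pd (eXi j) H (x, xi)"
    using c xi by (simp add: pd_scaleR differentiable_at_xi_nonzero powr_diff)
  finally show "pd (eXi j) H (x, c *\<^sub>R xi) = c powr (mu - 1) * pd (eXi j) H (x, xi)" .
qed

lemma pd_shift_along_xi:
  assumes inv: "invariant_along_xi H" and y: "y \<in> xi_nonzero"
  shows "pd (shift_along_xi tau v) H (shift_along_xi tau y) = pd v H y"
proof (rule pd_linear_pullback[OF linear_shift_along_xi open_xi_nonzero y])
  show "H (shift_along_xi tau z) = H z" if "z \<in> xi_nonzero" for z
    using that inv by (cases z) (simp add: shift_along_xi_def invariant_along_xi_def)
  show "H differentiable at (shift_along_xi tau y)"
    using y by (intro differentiable_at_xi_nonzero) (cases y, simp add: shift_along_xi_def)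
qed (rule has_derivative_pd_xi_nonzero[OF y])

lemma pd_eXi_shift_along_xi:
  assumes inv: "invariant_along_xi H" and y: "y \<in> xi_nonzero"
  shows "pd (eXi j) H (shift_along_xi tau y) = pd (eXi j) H y - tau * pd (ex j) H y"
proof -
  have "shift_along_xi tau (eXi j - tau *\<^sub>R ex j) = eXi j"
    by (simp add: shift_along_xi_def eXi_def ex_def)
  then have "pd (eXi j) H (shift_along_xi tau y) = pd (eXi j - tau *\<^sub>R ex j) H y"
    using pd_shift_along_xi[OF inv y, of tau "eXi j - tau *\<^sub>R ex j"] by simp
  then show ?thesis using y by (simp add: pd_diff pd_scaleR differentiable_at_xi_nonzero)
qed

lemma pd_along_xi_eq_0:
  assumes "invariant_along_xi H" and "xi \<noteq> 0"
  shows "pd (xi, 0) H (x, xi) = 0"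
proof (rule pd_eq_line_derivative[OF differentiable_at_xi_nonzero])
  show "H ((x, xi) + s *\<^sub>R (xi, 0)) = H (x, xi)" for s
    using assms by (simp add: invariant_along_xi_def)
qed (use assms in auto)

lemma pd_radial_xi:
  assumes hom: "homogeneous_in_xi mu H" and xi: "xi \<noteq> 0"
  shows "pd (0, xi) H (x, xi) = mu * H (x, xi)"
proof (rule pd_eq_line_derivative[OF differentiable_at_xi_nonzero])
  have "((\<lambda>s. (1 + s) powr mu) has_real_derivative mu) (at 0)"
    by (auto intro!: derivative_eq_intros)
  then show "((\<lambda>s. (1 + s) powr mu * H (x, xi)) has_real_derivative mu * H (x, xi)) (at 0)"
    by (rule DERIV_cmult_right)
  show "H ((x, xi) + s *\<^sub>R (0, xi)) = (1 + s) powr mu * H (x, xi)" if "\<bar>s\<bar> < 1" for s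
  proof -
    have "(x, xi) + s *\<^sub>R (0, xi) = (x, (1 + s) *\<^sub>R xi)" by (simp add: algebra_simps)
    then show ?thesis using hom xi that unfolding homogeneous_in_xi_def by simp
  qed
qed (use xi in simp)

end

lemma homogeneous_in_xi_John:
  assumes smooth: "smooth_on xi_nonzero H" and hom: "homogeneous_in_xi mu H"
  shows "homogeneous_in_xi (mu - 1) (John i j H)"
proof -
  have "homogeneous_in_xi (mu - 1) (pd (ex a) (pd (eXi b) H))" for a b
    using homogeneous_in_xi_pd_ex[OF smooth_on_pd[OF smooth] homogeneous_in_xi_pd_eXi[OF smooth hom]] .
  then show ?thesis
    unfolding John_def homogeneous_in_xi_def by (simp add: right_diff_distrib)
qed

lemma pd_along_xi_pd_eXi:
  assumes smooth: "smooth_on xi_nonzero H" and inv: "invariant_along_xi H" and xi: "xi \<noteq> 0"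
  shows "pd (xi, 0) (pd (eXi j) H) (x, xi) = - pd (ex j) H (x, xi)"
proof (rule pd_eq_line_derivative[OF differentiable_at_xi_nonzero[OF smooth_on_pd[OF smooth]]])
  show "pd (eXi j) H ((x, xi) + s *\<^sub>R (xi, 0)) = pd (eXi j) H (x, xi) - s * pd (ex j) H (x, xi)" for s
    using pd_eXi_shift_along_xi[OF smooth inv, of "(x, xi)" j s] xi by (simp add: shift_along_xi_def)
qed (use xi in \<open>auto intro!: derivative_eq_intros\<close>)

(* Shifting by tau changes d/dx^a d/dxi^b H by - tau d/dx^a d/dx^b H, which is symmetric
   in a and b and therefore cancels in John i j H. *)
lemma invariant_along_xi_John:
  fixes H :: "'n::finite pt \<Rightarrow> real"
  assumes smooth: "smooth_on xi_nonzero H" and inv: "invariant_along_xi H"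
  shows "invariant_along_xi (John i j H)"
  unfolding invariant_along_xi_def
proof (intro allI impI)
  fix x xi :: "real ^ 'n" and tau :: real
  assume "xi \<noteq> 0"
  then have y: "(x, xi) \<in> xi_nonzero" by simp
  have shifted: "pd (ex a) (pd (eXi b) H) (shift_along_xi tau (x, xi)) =
      pd (ex a) (pd (eXi b) H) (x, xi) - tau * pd (ex a) (pd (ex b) H) (x, xi)" for a b
  proof -
    have "shift_along_xi tau (ex a) = ex a" by (simp add: shift_along_xi_def ex_def)
    moreover have "pd (shift_along_xi tau (ex a)) (pd (eXi b) H) (shift_along_xi tau (x, xi)) =
        pd (ex a) (pd (eXi b) H) (x, xi) - tau * pd (ex a) (pd (ex b) H) (x, xi)"
    proof (rule pd_linear_pullback[OF linear_shift_along_xi open_xi_nonzero y])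
      show "pd (eXi b) H (shift_along_xi tau z) = pd (eXi b) H z - tau * pd (ex b) H z"
        if "z \<in> xi_nonzero" for z
        using pd_eXi_shift_along_xi[OF smooth inv that] .
      show "pd (eXi b) H differentiable at (shift_along_xi tau (x, xi))"
        using y by (intro differentiable_at_xi_nonzero smooth_on_pd smooth) (simp add: shift_along_xi_def)
      show "((\<lambda>z. pd (eXi b) H z - tau * pd (ex b) H z) has_derivative
          (\<lambda>v. pd v (pd (eXi b) H) (x, xi) - tau * pd v (pd (ex b) H) (x, xi))) (at (x, xi))"
        using y by (intro has_derivative_diff has_derivative_mult_right
            has_derivative_pd_xi_nonzero smooth_on_pd smooth)
    qed
    ultimately show ?thesis by simp
  qed
  have "pd (ex i) (pd (ex j) H) (x, xi) = pd (ex j) (pd (ex i) H) (x, xi)"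
    using smooth by (intro pd_pd_commute[OF open_xi_nonzero y]
        smooth_on_imp_differentiable_on smooth_on_imp_continuous_on smooth_on_pd)
  then show "John i j H (x + tau *\<^sub>R xi, xi) = John i j H (x, xi)"
    using shifted[of i j] shifted[of j i]
    by (simp add: John_def shift_along_xi_def algebra_simps)
qed

section \<open>Restriction to TS\<close>

definition tangent_TS :: "'n::finite pt \<Rightarrow> 'n pt \<Rightarrow> bool" where
  "tangent_TS p v \<longleftrightarrow> snd v \<bullet> snd p = 0 \<and> fst v \<bullet> snd p + fst p \<bullet> snd v = 0"

lemma TS_inner: "(x, xi) \<in> TS \<Longrightarrow> xi \<bullet> xi = 1 \<and> x \<bullet> xi = 0"
  by (simp add: TS_def norm_eq_1)

(* A rationally parametrised great circle keeps |Xi t| = 1 without square roots, and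
   removing the Xi t component of x + t a keeps the curve in TS. *)
lemma TS_curve:
  assumes p: "p \<in> TS" and v: "tangent_TS p v"
  shows "\<exists>\<gamma>. (\<forall>t. \<gamma> t \<in> TS) \<and> \<gamma> 0 = p \<and> (\<gamma> has_vector_derivative v) (at 0)"
proof -
  obtain x xi a b where pv: "p = (x, xi)" "v = (a, b)" by (cases p, cases v)
  have xi: "xi \<bullet> xi = 1" "x \<bullet> xi = 0" using TS_inner p pv by auto
  have b: "b \<bullet> xi = 0" "a \<bullet> xi + x \<bullet> b = 0" using v pv by (simp_all add: tangent_TS_def)
  define beta where "beta = b \<bullet> b"
  have den: "4 + t\<^sup>2 * beta > 0" for t :: real by (simp add: beta_def add_pos_nonneg)
  define c where "c t = (4 - t\<^sup>2 * beta) / (4 + t\<^sup>2 * beta)" for t :: real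
  define d where "d t = 4 * t / (4 + t\<^sup>2 * beta)" for t :: real
  define Xi where "Xi t = c t *\<^sub>R xi + d t *\<^sub>R b" for t
  define e where "e t = (x + t *\<^sub>R a) \<bullet> Xi t" for t
  define \<gamma> where "\<gamma> t = (x + t *\<^sub>R a - e t *\<^sub>R Xi t, Xi t)" for t
  have Xi0: "Xi 0 = xi" and e0: "e 0 = 0" by (simp_all add: e_def Xi_def c_def d_def xi)
  have unit: "Xi t \<bullet> Xi t = 1" for t
  proof -
    have "Xi t \<bullet> Xi t = (c t)\<^sup>2 + (d t)\<^sup>2 * beta"
      by (simp add: Xi_def inner_add_left inner_add_right xi b inner_commute beta_def power2_eq_square)
    also have "\<dots> = ((4 - t\<^sup>2 * beta)\<^sup>2 + (4 * t)\<^sup>2 * beta) / (4 + t\<^sup>2 * beta)\<^sup>2"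
      unfolding c_def d_def by (simp add: power_divide add_divide_distrib)
    also have "(4 - t\<^sup>2 * beta)\<^sup>2 + (4 * t)\<^sup>2 * beta = (4 + t\<^sup>2 * beta)\<^sup>2"
      by (simp add: power2_eq_square algebra_simps)
    finally show ?thesis using den[of t] by simp
  qed
  have "\<gamma> t \<in> TS" for t
    using unit[of t] by (simp add: \<gamma>_def e_def TS_def norm_eq_1 inner_diff_left)
  moreover have "\<gamma> 0 = p" by (simp add: \<gamma>_def Xi0 e0 pv)
  moreover have "(\<gamma> has_vector_derivative v) (at 0)"
  proof -
    have "(c has_real_derivative 0) (at 0)" "(d has_real_derivative 1) (at 0)"
      unfolding c_def d_def by (auto intro!: derivative_eq_intros)
    then have dXi: "(Xi has_vector_derivative b) (at 0)"
      unfolding Xi_def[abs_def] by (auto intro!: derivative_eq_intros simp: c_def d_def)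
    have dline: "((\<lambda>t. x + t *\<^sub>R a) has_derivative (\<lambda>h. h *\<^sub>R a)) (at 0)"
      by (auto intro!: derivative_eq_intros)
    have "(e has_real_derivative (x \<bullet> b + a \<bullet> xi)) (at 0)"
      unfolding has_field_derivative_def e_def[abs_def]
      by (rule has_derivative_eq_rhs[OF has_derivative_inner[OF dline dXi[unfolded has_vector_derivative_def]]])
        (simp add: fun_eq_iff Xi_def c_def d_def inner_commute algebra_simps)
    then have "(e has_real_derivative 0) (at 0)"
      using b(2) by (simp add: add.commute)
    then show ?thesis
      using dXi unfolding \<gamma>_def[abs_def] pv
      by (auto intro!: derivative_eq_intros simp: Xi0 e0)
  qed
  ultimately show ?thesis by blast
qed

lemma has_derivative_within_TS_unique:
  assumes p: "p \<in> TS" and v: "tangent_TS p v"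
    and d1: "(g has_derivative f1) (at p within TS)" and d2: "(g has_derivative f2) (at p within TS)"
  shows "f1 v = f2 v"
proof -
  obtain \<gamma> where \<gamma>: "\<And>t. \<gamma> t \<in> TS" "\<gamma> 0 = p" and d\<gamma>: "(\<gamma> has_derivative (\<lambda>h. h *\<^sub>R v)) (at 0)"
    using TS_curve[OF p v] unfolding has_vector_derivative_def by blast
  have "range \<gamma> \<subseteq> TS" using \<gamma>(1) by auto
  then have "((g \<circ> \<gamma>) has_derivative (f \<circ> (\<lambda>h. h *\<^sub>R v))) (at 0)"
    if "(g has_derivative f) (at p within TS)" for f
    using diff_chain_within[OF d\<gamma> has_derivative_subset[OF that[folded \<gamma>(2)]]] by simp
  from fun_cong[OF has_derivative_unique[OF this[OF d1] this[OF d2]], of 1] show ?thesis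
    by simp
qed

lemma vf_act_eqI:
  assumes p: "p \<in> TS" and tangent: "tangent_TS p (V p)"
    and eq: "\<And>q. q \<in> TS \<Longrightarrow> g q = A q" and dA: "(A has_derivative A') (at p)"
  shows "vf_act V g p = A' (V p)"
proof -
  have dg: "(g has_derivative A') (at p within TS)"
    using has_derivative_at_withinI[OF dA]
    by (rule has_derivative_transform_within[where d=1]) (auto simp: p eq)
  have "(g has_derivative (SOME f'. (g has_derivative f') (at p within TS))) (at p within TS)"
    using someI_ex[of "\<lambda>f'. (g has_derivative f') (at p within TS)"] dg by blast
  from has_derivative_within_TS_unique[OF p tangent this dg] show ?thesis
    unfolding vf_act_def .
qed

lemma vf_act_cong:
  assumes p: "p \<in> TS" and eq: "\<And>q. q \<in> TS \<Longrightarrow> g q = h q"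
  shows "vf_act V g p = vf_act V h p"
proof -
  have "(g has_derivative f') (at p within TS) \<longleftrightarrow> (h has_derivative f') (at p within TS)" for f'
  proof
    assume "(g has_derivative f') (at p within TS)"
    then show "(h has_derivative f') (at p within TS)"
      by (rule has_derivative_transform_within[where d=1]) (auto simp: p eq)
  next
    assume "(h has_derivative f') (at p within TS)"
    then show "(g has_derivative f') (at p within TS)"
      by (rule has_derivative_transform_within[where d=1]) (auto simp: p eq)
  qed
  then show ?thesis unfolding vf_act_def by simp
qed

lemma Eop_cong:
  assumes p: "p \<in> TS" and eq: "\<And>q. q \<in> TS \<Longrightarrow> g q = h q"
  shows "Eop lam k l i j g p = Eop lam k l i j h p"
proof -
  have "vf_act W (vf_act V g) p = vf_act W (vf_act V h) p" for V W
    using vf_act_cong[OF _ eq] by (intro vf_act_cong[OF p])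
  then show ?thesis unfolding Eop_def John_TS_def using vf_act_cong[OF p eq] by simp
qed

lemma Xt_eq: "Xt i (x, xi) = ex i - (xi $ i) *\<^sub>R (xi, 0)"
  by (simp add: Xt_def ex_def)

lemma Xit_eq: "Xit j (x, xi) = eXi j - (x $ j) *\<^sub>R (xi, 0) - (xi $ j) *\<^sub>R (0, xi)"
  by (simp add: Xit_def eXi_def)

lemma tangent_TS_Xt:
  assumes "(x, xi) \<in> TS"
  shows "tangent_TS (x, xi) (Xt i (x, xi))"
  using TS_inner[OF assms] by (simp add: tangent_TS_def Xt_def inner_diff_left inner_axis')

lemma tangent_TS_Xit:
  assumes "(x, xi) \<in> TS"
  shows "tangent_TS (x, xi) (Xit i (x, xi))"
  using TS_inner[OF assms]
  by (simp add: tangent_TS_def Xit_def inner_diff_left inner_diff_right inner_axis inner_axis' inner_commute)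

lemma TS_subset_xi_nonzero: "TS \<subseteq> xi_nonzero"
  by (auto simp: TS_def xi_nonzero_def)

lemma pd_Xt:
  assumes "F differentiable at (x, xi)"
  shows "pd (Xt a (x, xi)) F (x, xi) = pd (ex a) F (x, xi) - xi $ a * pd (xi, 0) F (x, xi)"
  unfolding Xt_eq by (simp only: pd_diff[OF assms] pd_scaleR[OF assms])

lemma pd_Xit:
  assumes "F differentiable at (x, xi)"
  shows "pd (Xit b (x, xi)) F (x, xi) =
    pd (eXi b) F (x, xi) - x $ b * pd (xi, 0) F (x, xi) - xi $ b * pd (0, xi) F (x, xi)"
  unfolding Xit_eq by (simp only: pd_diff[OF assms] pd_scaleR[OF assms])

context
  fixes H g :: "'n::finite pt \<Rightarrow> real"
  assumes smooth: "smooth_on xi_nonzero H" and inv: "invariant_along_xi H"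
    and restr: "\<And>q. q \<in> TS \<Longrightarrow> g q = H q"
begin

lemma X_restriction:
  assumes p: "(x, xi) \<in> TS"
  shows "X a g (x, xi) = pd (ex a) H (x, xi)"
proof -
  have xi: "xi \<noteq> 0" and y: "(x, xi) \<in> xi_nonzero" using p TS_subset_xi_nonzero by auto
  have "X a g (x, xi) = pd (Xt a (x, xi)) H (x, xi)"
    by (rule vf_act_eqI[where V="Xt a", OF p tangent_TS_Xt[OF p] restr has_derivative_pd_xi_nonzero[OF smooth y]])
  also have "\<dots> = pd (ex a) H (x, xi)"
    using pd_Xt[OF differentiable_at_xi_nonzero[OF smooth y]] pd_along_xi_eq_0[OF smooth inv xi]
    by simp
  finally show ?thesis .
qed

lemma Xi_restriction:
  assumes hom: "homogeneous_in_xi mu H" and p: "(x, xi) \<in> TS"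
  shows "Xi b g (x, xi) = pd (eXi b) H (x, xi) - mu * (xi $ b * H (x, xi))"
proof -
  have xi: "xi \<noteq> 0" and y: "(x, xi) \<in> xi_nonzero" using p TS_subset_xi_nonzero by auto
  have "Xi b g (x, xi) = pd (Xit b (x, xi)) H (x, xi)"
    by (rule vf_act_eqI[where V="Xit b", OF p tangent_TS_Xit[OF p] restr has_derivative_pd_xi_nonzero[OF smooth y]])
  also have "\<dots> = pd (eXi b) H (x, xi) - mu * (xi $ b * H (x, xi))"
    using pd_Xit[OF differentiable_at_xi_nonzero[OF smooth y]]
      pd_along_xi_eq_0[OF smooth inv xi] pd_radial_xi[OF smooth hom xi]
    by simp
  finally show ?thesis .
qed

lemma X_Xi_restriction:
  assumes hom: "homogeneous_in_xi mu H" and p: "(x, xi) \<in> TS"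
  shows "X a (Xi b g) (x, xi) = pd (ex a) (pd (eXi b) H) (x, xi)
    + xi $ a * pd (ex b) H (x, xi) - mu * (xi $ b * pd (ex a) H (x, xi))"
proof -
  have xi: "xi \<noteq> 0" and y: "(x, xi) \<in> xi_nonzero" using p TS_subset_xi_nonzero by auto
  have smooth': "smooth_on xi_nonzero (pd (eXi b) H)" using smooth by (rule smooth_on_pd)
  have "((\<lambda>q. snd q $ b) has_derivative (\<lambda>v. snd v $ b)) (at (x, xi))"
    by (intro bounded_linear_imp_has_derivative bounded_linear_compose[OF bounded_linear_vec_nth]
        bounded_linear_snd)
  then have dA: "((\<lambda>q. pd (eXi b) H q - mu * (snd q $ b * H q)) has_derivative
      (\<lambda>v. pd v (pd (eXi b) H) (x, xi) - mu * (xi $ b * pd v H (x, xi) + snd v $ b * H (x, xi))))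
      (at (x, xi))"
    using has_derivative_pd_xi_nonzero[OF smooth' y] has_derivative_pd_xi_nonzero[OF smooth y]
    by (auto intro!: derivative_eq_intros)
  have "Xi b g q = pd (eXi b) H q - mu * (snd q $ b * H q)" if "q \<in> TS" for q
    using that by (cases q) (simp add: Xi_restriction[OF hom])
  then have "X a (Xi b g) (x, xi) = pd (Xt a (x, xi)) (pd (eXi b) H) (x, xi)
      - mu * (xi $ b * pd (Xt a (x, xi)) H (x, xi) + snd (Xt a (x, xi)) $ b * H (x, xi))"
    by (rule vf_act_eqI[where V="Xt a", OF p tangent_TS_Xt[OF p] _ dA])
  also have "\<dots> = pd (ex a) (pd (eXi b) H) (x, xi)
      + xi $ a * pd (ex b) H (x, xi) - mu * (xi $ b * pd (ex a) H (x, xi))"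
    using pd_Xt[OF differentiable_at_xi_nonzero[OF smooth' y]] pd_along_xi_pd_eXi[OF smooth inv xi]
      pd_Xt[OF differentiable_at_xi_nonzero[OF smooth y]] pd_along_xi_eq_0[OF smooth inv xi]
    by (simp add: Xt_def)
  finally show ?thesis .
qed

end

definition admissible :: "real \<Rightarrow> ('n::finite pt \<Rightarrow> real) \<Rightarrow> bool" where
  "admissible mu H \<longleftrightarrow>
     smooth_on xi_nonzero H \<and> homogeneous_in_xi mu H \<and> invariant_along_xi H"

lemma admissible_John: "admissible mu H \<Longrightarrow> admissible (mu - 1) (John i j H)"
  unfolding admissible_def
  by (simp add: smooth_on_John[OF open_xi_nonzero] homogeneous_in_xi_John invariant_along_xi_John)

lemma admissible_John_comp: "admissible mu H \<Longrightarrow> admissible (mu - length ps) (John_comp ps H)"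
proof (induction ps)
  case (Cons ij ps)
  then show ?case
    using admissible_John by (cases ij) (fastforce simp: algebra_simps)
qed simp

lemma John_restriction:
  assumes adm: "admissible mu H" and restr: "\<And>q. q \<in> TS \<Longrightarrow> g q = H q" and p: "p \<in> TS"
  shows "John i j H p = John_TS i j g p - (mu + 1) * (snd p $ i * X j g p - snd p $ j * X i g p)"
proof -
  obtain x xi where pxi: "p = (x, xi)" by (cases p)
  have smooth: "smooth_on xi_nonzero H" and hom: "homogeneous_in_xi mu H"
    and inv: "invariant_along_xi H"
    using adm by (simp_all add: admissible_def)
  have X: "X a g (x, xi) = pd (ex a) H (x, xi)" for a
    using X_restriction[OF smooth inv restr] p by (simp add: pxi)
  have X_Xi: "X a (Xi b g) (x, xi) = pd (ex a) (pd (eXi b) H) (x, xi)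
      + xi $ a * pd (ex b) H (x, xi) - mu * (xi $ b * pd (ex a) H (x, xi))" for a b
    using X_Xi_restriction[OF smooth inv restr hom] p by (simp add: pxi)
  show ?thesis
    unfolding pxi John_def John_TS_def X X_Xi by (simp add: algebra_simps)
qed

(* The degree of F makes the operand John_comp ps' F of the first factor E_l homogeneous of
   degree mu = lam - k + l, and mu + 1 is the constant c_l of E_l. *)
lemma John_comp_eq_Eseq:
  assumes "admissible (lam - real k + real l + real (length ps) - 1) F"
    and restr: "\<And>q. q \<in> TS \<Longrightarrow> G q = F q" and "p \<in> TS"
  shows "John_comp ps F p = Eseq lam k l ps G p"
  using assms(1,3)
proof (induction ps arbitrary: l p)
  case Nil
  then show ?case using restr by simp
next
  case (Cons ij ps)
  obtain i j where ij: "ij = (i, j)" by (cases ij)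
  define H where "H = John_comp ps F"
  have adm_F: "admissible (lam - real k + real (Suc l) + real (length ps) - 1) F"
    using Cons.prems(1) by (simp add: algebra_simps)
  have adm_H: "admissible (lam - real k + real l) H"
  proof -
    have "lam - real k + real (Suc l) + real (length ps) - 1 - real (length ps) = lam - real k + real l"
      by simp
    then show ?thesis using admissible_John_comp[OF adm_F, of ps] by (simp only: H_def)
  qed
  have IH: "Eseq lam k (Suc l) ps G q = H q" if "q \<in> TS" for q
    using Cons.IH[OF adm_F that] by (simp add: H_def)
  have "Eseq lam k l (ij # ps) G p = Eop lam k l i j (Eseq lam k (Suc l) ps G) p"
    by (simp add: ij)
  also have "\<dots> = Eop lam k l i j H p"
    by (rule Eop_cong[OF Cons.prems(2) IH])
  also have "\<dots> = John i j H p"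
    unfolding Eop_def using John_restriction[where g=H, OF adm_H _ Cons.prems(2)] by simp
  finally show ?case by (simp add: ij H_def)
qed

theorem lemma3p2:
  fixes psi :: "(real ^ 'n::finite) \<times> (real ^ 'n) \<Rightarrow> real"
    and lam :: real
    and ps :: "('n \<times> 'n) list"
  assumes smooth: "smooth_on (UNIV \<times> (UNIV - {0})) psi"
    and homog: "\<And>x xi c. xi \<noteq> 0 \<Longrightarrow> c > 0 \<Longrightarrow> psi (x, c *\<^sub>R xi) = c powr lam * psi (x, xi)"
    and transl: "\<And>x xi tau. xi \<noteq> 0 \<Longrightarrow> psi (x + tau *\<^sub>R xi, xi) = psi (x, xi)"
    and k_pos: "length ps \<ge> 1"
  shows "\<forall>p\<in>TS. John_comp ps psi p
           = Eseq lam (length ps) 1 ps (\<lambda>q. if q \<in> TS then psi q else 0) p"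
proof
  fix p :: "'n pt"
  assume p: "p \<in> TS"
  have "admissible lam psi"
    using smooth homog transl
    by (simp add: admissible_def xi_nonzero_def homogeneous_in_xi_def invariant_along_xi_def)
  then have "admissible (lam - real (length ps) + real (1::nat) + real (length ps) - 1) psi"
    by simp
  then show "John_comp ps psi p = Eseq lam (length ps) 1 ps (\<lambda>q. if q \<in> TS then psi q else 0) p"
    by (rule John_comp_eq_Eseq[OF _ _ p]) simp
qed

end
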